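(* Let $\alpha>0$, $\beta>0$ and $\|a\|\ge\alpha$ be real numbers, $\kappa=\|a\|/\beta$, and let $\gamma_{\mathrm{opt}}(\alpha,\beta,\|a\|)$ be the smallest positive root of $\mu^3-(\|a\|^2+\beta^2)\mu+\alpha\beta^2=0$. Let \[ D_1=\begin{bmatrix}\frac1\alpha&\frac1\beta\left(1+\frac{\|a\|}{\alpha}\right)\\ \frac1\beta\left(1+\frac{\|a\|}{\alpha}\right)&\frac{\|a\|}{\beta^2}\left(1+\frac{\|a\|}{\alpha}\right)\end{bmatrix}. \] Then \[ \gamma_{\mathrm{opt}}(\alpha,\beta,\|a\|)>\frac{\alpha}{1+\kappa^2}>\frac{1}{\rho(D_1)}, \] where $\rho(D_1)$ denotes the spectral radius of $D_1$. *)

theory Defs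
  imports Complex_Main "Jordan_Normal_Form.Spectral_Radius"
begin

text \<open>gamma_opt alpha beta na: the smallest positive root of
  mu^3 - (na^2 + beta^2) mu + alpha beta^2 = 0 (na stands for the norm of a).\<close>
definition gamma_opt :: "real \<Rightarrow> real \<Rightarrow> real \<Rightarrow> real" where
  "gamma_opt \<alpha> \<beta> na =
     Inf {\<mu>::real. \<mu> > 0 \<and> \<mu>^3 - (na^2 + \<beta>^2) * \<mu> + \<alpha> * \<beta>^2 = 0}"

text \<open>The 2x2 matrix D_1, viewed as a complex matrix so that the library's spectral radius applies.\<close>
definition D1 :: "real \<Rightarrow> real \<Rightarrow> real \<Rightarrow> complex mat" where
  "D1 \<alpha> \<beta> na = map_mat complex_of_real (mat_of_rows_list 2
     [[1 / \<alpha>, (1 / \<beta>) * (1 + na / \<alpha>)],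
      [(1 / \<beta>) * (1 + na / \<alpha>), (na / \<beta>^2) * (1 + na / \<alpha>)]])"

end

theory Submission
  imports Defs
begin

(* Proof idea.  Write K = \<parallel>a\<parallel>^2 + \<beta>^2; then \<alpha>/(1 + \<kappa>^2) = \<alpha>\<beta>^2/K, and both claims
   compare quantities with this number m = \<alpha>\<beta>^2/K.

   For a positive root \<mu> of \<mu>^3 - K\<mu> + Km = 0 one has K(\<mu> - m) = \<mu>^3 > 0,
   so \<mu> > m; quantitatively \<mu> \<ge> m + m^3/(2K).  Such a root exists in (0, \<alpha>] by the
   intermediate value theorem, since the cubic is \<alpha>\<beta>^2 > 0 at 0 and
   \<alpha>(\<alpha>^2 - \<parallel>a\<parallel>^2) \<le> 0 at \<alpha>.  Hence gamma_opt, the infimum of the positive roots,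
   exceeds m.

   A real symmetric 2x2 matrix [[a,b],[b,d]] with b \<noteq> 0, b^2 > ad, a + d > 0
   has the eigenvalue (t + s)/2 with t = a + d, s = sqrt((a-d)^2 + 4b^2) > t, so its
   spectral radius exceeds its trace.  For D_1 the trace is 1/\<alpha> + \<parallel>a\<parallel>/\<beta>^2 + \<parallel>a\<parallel>^2/(\<alpha>\<beta>^2)
   > 1/m, giving 1/\<rho>(D_1) < m. *)

text \<open>Every positive root of \<open>\<mu>^3 - K\<mu> + c\<close> (with \<open>K, c > 0\<close>) lies uniformly above
  \<open>m = c/K\<close>: this uniform gap is what makes the infimum of the roots strictly larger than \<open>m\<close>.\<close>
lemma cubic_positive_root_lower_bound:
  fixes K c \<mu> :: real
  assumes K: "K > 0" and c: "c > 0"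
    and \<mu>: "\<mu> > 0" and root: "\<mu>^3 - K * \<mu> + c = 0"
  shows "\<mu> \<ge> c / K + (c / K)^3 / (2 * K)"
proof (rule ccontr)
  define m where "m = c / K"
  have m: "m > 0" and Km: "K * m = c" using K c unfolding m_def by simp_all
  assume "\<not> ?thesis"
  hence below: "K * \<mu> < K * m + m^3 / 2"
    using K unfolding m_def[symmetric] by (simp add: field_simps)
  show False
  proof (cases "\<mu> \<le> m")
    case True
    hence "K * \<mu> \<le> K * m" using K by simp
    hence "K * \<mu> \<le> c" using Km by simp
    moreover have "\<mu>^3 > 0" using \<mu> by simp
    ultimately show False using root by linarith
  next
    case False
    hence "m^3 < \<mu>^3" using m by (simp add: power_strict_mono)
    moreover have "m^3 > 0" using m by simp
    ultimately show False using root below Km by linarith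
  qed
qed

text \<open>The cubic defining \<open>gamma_opt\<close> has a root in \<open>(0, \<alpha>]\<close>, so the infimum is taken
  over a nonempty set.\<close>
lemma cubic_has_positive_root:
  fixes \<alpha> \<beta> na :: real
  assumes \<alpha>: "\<alpha> > 0" and \<beta>: "\<beta> > 0" and na: "na \<ge> \<alpha>"
  shows "\<exists>\<mu>>0. \<mu>^3 - (na^2 + \<beta>^2) * \<mu> + \<alpha> * \<beta>^2 = 0"
proof -
  define p where "p = (\<lambda>\<mu>::real. \<mu>^3 - (na^2 + \<beta>^2) * \<mu> + \<alpha> * \<beta>^2)"
  have "p \<alpha> = \<alpha> * (\<alpha>^2 - na^2)"
    unfolding p_def by (simp add: algebra_simps power2_eq_square power3_eq_cube)
  moreover have "\<alpha>^2 \<le> na^2" using \<alpha> na by (simp add: power_mono)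
  ultimately have "p \<alpha> \<le> 0" using \<alpha> by (simp add: mult_nonneg_nonpos)
  moreover have "p 0 > 0" unfolding p_def using \<alpha> \<beta> by simp
  moreover have "\<forall>x. 0 \<le> x \<and> x \<le> \<alpha> \<longrightarrow> isCont p x"
    unfolding p_def by (auto intro!: continuous_intros)
  ultimately obtain \<mu> where "0 \<le> \<mu>" "p \<mu> = 0"
    using IVT2[of p \<alpha> 0 0] \<alpha> by auto
  moreover have "\<mu> \<noteq> 0" using \<open>p \<mu> = 0\<close> \<open>p 0 > 0\<close> by auto
  ultimately show ?thesis unfolding p_def by (metis less_le)
qed

lemma gamma_opt_lower_bound:
  fixes \<alpha> \<beta> na :: real
  assumes \<alpha>: "\<alpha> > 0" and \<beta>: "\<beta> > 0" and na: "na \<ge> \<alpha>"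
  shows "gamma_opt \<alpha> \<beta> na > \<alpha> * \<beta>^2 / (na^2 + \<beta>^2)"
proof -
  define K where "K = na^2 + \<beta>^2"
  define m where "m = \<alpha> * \<beta>^2 / K"
  define S where "S = {\<mu>::real. \<mu> > 0 \<and> \<mu>^3 - K * \<mu> + \<alpha> * \<beta>^2 = 0}"
  have K: "K > 0" using \<beta> unfolding K_def by (simp add: add_nonneg_pos)
  have c: "\<alpha> * \<beta>^2 > 0" using \<alpha> \<beta> by simp
  have "S \<noteq> {}" using cubic_has_positive_root[OF \<alpha> \<beta> na] unfolding S_def K_def by auto
  moreover have "\<And>\<mu>. \<mu> \<in> S \<Longrightarrow> m + m^3 / (2 * K) \<le> \<mu>"
    unfolding S_def m_def using cubic_positive_root_lower_bound[OF K c] by auto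
  ultimately have "m + m^3 / (2 * K) \<le> Inf S" by (rule cInf_greatest)
  moreover have "m > 0" using K c unfolding m_def by simp
  ultimately have "m < Inf S" using K by (smt (verit) divide_pos_pos zero_less_power)
  thus ?thesis unfolding gamma_opt_def m_def S_def K_def .
qed

text \<open>Any real root of the characteristic polynomial \<open>\<lambda>^2 - (a+d)\<lambda> + (ad - b^2)\<close> of
  \<open>[[a,b],[b,d]]\<close> is an eigenvalue, with eigenvector \<open>(b, \<lambda> - a)\<close> (nonzero as \<open>b \<noteq> 0\<close>).\<close>
lemma symmetric_2x2_eigenvalue:
  fixes a b d l :: real
  assumes b: "b \<noteq> 0" and l: "l^2 - (a + d) * l + (a * d - b^2) = 0"
  shows "eigenvalue (map_mat complex_of_real (mat_of_rows_list 2 [[a, b], [b, d]]))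
           (complex_of_real l)"
proof -
  let ?A = "map_mat complex_of_real (mat_of_rows_list 2 [[a, b], [b, d]])"
  let ?v = "vec_of_list [complex_of_real b, complex_of_real (l - a)]"
  have second_row: "b * b + d * (l - a) = l * (l - a)"
    using l by (simp add: power2_eq_square algebra_simps)
  have "?A *\<^sub>v ?v = complex_of_real l \<cdot>\<^sub>v ?v"
  proof (rule eq_vecI)
    fix i assume "i < dim_vec (complex_of_real l \<cdot>\<^sub>v ?v)"
    hence "i = 0 \<or> i = 1" by auto
    moreover have "complex_of_real (b * b + d * (l - a)) = complex_of_real (l * (l - a))"
      using second_row by simp
    ultimately show "(?A *\<^sub>v ?v) $ i = (complex_of_real l \<cdot>\<^sub>v ?v) $ i"
      by (auto simp: mat_of_rows_list_def scalar_prod_def algebra_simps)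
  qed (auto simp: mat_of_rows_list_def)
  moreover have "?v \<noteq> 0\<^sub>v 2"
    using b by (metis index_zero_vec(1) nth_Cons_0 of_real_eq_0_iff vec_of_list_index pos2)
  ultimately show ?thesis unfolding eigenvalue_def eigenvector_def
    by (intro exI[of _ ?v]) (auto simp: mat_of_rows_list_def)
qed

text \<open>If \<open>b \<noteq> 0\<close>, \<open>b^2 > ad\<close> and the trace \<open>a + d\<close> is positive, the larger eigenvalue
  \<open>(t + s)/2\<close> exceeds the trace, hence so does the spectral radius.\<close>
lemma symmetric_2x2_spectral_radius_gt_trace:
  fixes a b d :: real
  assumes off_diagonal: "b \<noteq> 0" and indefinite: "b^2 > a * d" and trace: "a + d > 0"
  shows "spectral_radius (map_mat complex_of_real (mat_of_rows_list 2 [[a, b], [b, d]])) > a + d"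
proof -
  let ?A = "map_mat complex_of_real (mat_of_rows_list 2 [[a, b], [b, d]])"
  define t where "t = a + d"
  define s where "s = sqrt ((a - d)^2 + 4 * b^2)"
  define l where "l = (t + s) / 2"
  have s2: "s^2 = (a - d)^2 + 4 * b^2" unfolding s_def by simp
  have "t^2 < s^2" using s2 indefinite unfolding t_def by (simp add: power2_eq_square algebra_simps)
  hence "t < s" using trace unfolding t_def s_def by (simp add: real_less_rsqrt)
  hence lt: "t < l" unfolding l_def by simp
  have "l^2 - (a + d) * l + (a * d - b^2) = 0"
    unfolding l_def t_def using s2 by (simp add: power2_eq_square field_simps)
  hence "complex_of_real l \<in> spectrum ?A"
    unfolding spectrum_def using symmetric_2x2_eigenvalue[OF off_diagonal] by simp
  moreover have carrier: "?A \<in> carrier_mat 2 2"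
    by (rule carrier_matI) (simp_all add: mat_of_rows_list_def)
  ultimately have "norm (complex_of_real l) \<le> spectral_radius ?A"
    by (intro spectral_radius_mem_max(2)[OF carrier] image_eqI[where x = "complex_of_real l"]) auto
  thus ?thesis using lt trace unfolding t_def by simp
qed

lemma D1_spectral_radius_lower_bound:
  fixes \<alpha> \<beta> na :: real
  assumes \<alpha>: "\<alpha> > 0" and \<beta>: "\<beta> > 0" and na: "na \<ge> \<alpha>"
  shows "spectral_radius (D1 \<alpha> \<beta> na) > (na^2 + \<beta>^2) / (\<alpha> * \<beta>^2)"
proof -
  define c where "c = 1 + na / \<alpha>"
  define a where "a = 1 / \<alpha>"
  define b where "b = (1 / \<beta>) * c"
  define d where "d = (na / \<beta>^2) * c"
  have c: "c > 0" using \<alpha> na unfolding c_def by (simp add: add_pos_nonneg)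
  have "b^2 - a * d = c / \<beta>^2" using \<alpha> \<beta> unfolding a_def b_def d_def c_def
    by (simp add: field_simps power2_eq_square)
  hence "b^2 > a * d" using c \<beta> by (smt (verit) divide_pos_pos zero_less_power)
  moreover have "b \<noteq> 0" using c \<beta> unfolding b_def by simp
  moreover have trace: "a + d = (na^2 + \<beta>^2) / (\<alpha> * \<beta>^2) + na / \<beta>^2"
    using \<alpha> \<beta> unfolding a_def d_def c_def by (simp add: field_simps power2_eq_square)
  moreover have "na / \<beta>^2 > 0" using \<alpha> \<beta> na by simp
  moreover have "(na^2 + \<beta>^2) / (\<alpha> * \<beta>^2) > 0" using \<alpha> \<beta> by (simp add: add_nonneg_pos)
  ultimately have "spectral_radius (D1 \<alpha> \<beta> na) > a + d"
    unfolding D1_def a_def[symmetric] c_def[symmetric] b_def[symmetric] d_def[symmetric]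
    by (intro symmetric_2x2_spectral_radius_gt_trace) auto
  thus ?thesis using trace \<open>na / \<beta>^2 > 0\<close> by linarith
qed

theorem mainTheorem3:
  fixes \<alpha> \<beta> na \<kappa> :: real
  assumes "\<alpha> > 0" and "\<beta> > 0" and "na \<ge> \<alpha>"
    and "\<kappa> = na / \<beta>"
  shows "gamma_opt \<alpha> \<beta> na > \<alpha> / (1 + \<kappa>^2)
       \<and> \<alpha> / (1 + \<kappa>^2) > 1 / spectral_radius (D1 \<alpha> \<beta> na)"
proof
  have m: "\<alpha> / (1 + \<kappa>^2) = \<alpha> * \<beta>^2 / (na^2 + \<beta>^2)"
    unfolding assms(4) using assms by (simp add: field_simps power_divide)
  show "gamma_opt \<alpha> \<beta> na > \<alpha> / (1 + \<kappa>^2)"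
    unfolding m using gamma_opt_lower_bound assms by blast
  have "(na^2 + \<beta>^2) / (\<alpha> * \<beta>^2) > 0" using assms by (simp add: add_nonneg_pos)
  with D1_spectral_radius_lower_bound[OF assms(1-3)]
  have "1 / spectral_radius (D1 \<alpha> \<beta> na) < 1 / ((na^2 + \<beta>^2) / (\<alpha> * \<beta>^2))"
    by (intro frac_less2) auto
  thus "\<alpha> / (1 + \<kappa>^2) > 1 / spectral_radius (D1 \<alpha> \<beta> na)" unfolding m by simp
qed

end
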